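(* Let $W\in\mathbb{C}^{N\times N}$ be Hermitian positive definite and let $\vec b\in\mathbb{C}^N$ with $\|\vec b\|_2=1$. Run the Lanczos iteration on $(W,\vec b)$ and suppose it terminates at step $n\le N$, producing the $n\times n$ Jacobi matrix $T=T(W,\vec b)$. Let $T=HH^T$ be the Cholesky factorization of $T$, where $H$ is the lower-bidiagonal $n\times n$ matrix with diagonal entries $\alpha_0,\alpha_1,\dots,\alpha_{n-1}>0$ and subdiagonal entries $\beta_0,\dots,\beta_{n-2}$ (i.e. $H_{j+1,j+1}=\alpha_j$, $H_{j+2,j+1}=\beta_j$). (a) For the conjugate gradient algorithm (CGA) applied to $W\vec x=\vec b$ with $\vec x_0=0$, for every $k<n$, $$\|\vec r_k(W,\vec b)\|_2=\prod_{j=0}^{k-1}\frac{\beta_j}{\alpha_j},\qquad \|\vec e_k(W,\vec b)\|_W=\|\vec r_k(W,\vec b)\|_2\sqrt{\vec f_1^*(L_kL_k^T)^{-1}\vec f_1},\quad L_k=H_{k+1:n,\,k+1:n}.$$ (b) For the MINRES algorithm applied to $W\vec x=\vec b$, for every $k<n$, $$\|\vec r_k(W,\vec b)\|_2=\Big(\sum_{j=0}^k\prod_{\ell=0}^{j-1}\frac{\alpha_\ell^2}{\beta_\ell^2}\Big)^{-1/2}$$ (empty products equal $1$). Moreover $\vec r_n=0$.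
   Context: Lanczos iteration on $(W,\vec q_1)$, $\|\vec q_1\|_2=1$, $W=W^*$: set $b_{-1}=1$, $\vec q_0=0$; for $k=1,2,\dots$: $a_{k-1}=(W\vec q_k-b_{k-2}\vec q_{k-1})^*\vec q_k$, $\vec v_k=W\vec q_k-a_{k-1}\vec q_k-b_{k-2}\vec q_{k-1}$, $b_{k-1}=\|\vec v_k\|_2$; if $b_{k-1}\neq0$ set $\vec q_{k+1}=\vec v_k/b_{k-1}$, otherwise terminate. If it terminates at step $n$, $T(W,\vec q_1)$ is the $n\times n$ symmetric tridiagonal matrix with diagonal $a_0,\dots,a_{n-1}$ and off-diagonal $b_0,\dots,b_{n-2}$. The Krylov subspace is $\mathcal K_k=\mathrm{span}\{\vec b,W\vec b,\dots,W^{k-1}\vec b\}$. The $k$-th CGA iterate (with $\vec x_0=0$) is $\vec x_k=\mathrm{argmin}_{\vec y\in\mathcal K_k}\|\vec x-\vec y\|_W$ where $\vec x=W^{-1}\vec b$ and $\|\vec y\|_W^2=\vec y^*W\vec y$; the $k$-th MINRES iterate is $\vec x_k=\mathrm{argmin}_{\vec y\in\mathcal K_k}\|\vec b-W\vec y\|_2$. For either method $\vec r_k=\vec b-W\vec x_k$ and $\vec e_k=\vec x-\vec x_k$. $\vec f_1,\vec f_2,\dots$ is the standard basis; $H_{i:k,j:\ell}$ denotes the submatrix of rows $i..k$ and columns $j..\ell$. *)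

theory Defs
  imports "HOL-Analysis.Analysis"
begin

definition cinner :: "complex^'n \<Rightarrow> complex^'n \<Rightarrow> complex" where
  "cinner y x = (\<Sum>i\<in>UNIV. cnj (y $ i) * x $ i)"

definition hermitian :: "complex^'n^'n \<Rightarrow> bool" where
  "hermitian W \<longleftrightarrow> (\<forall>i j. W $ i $ j = cnj (W $ j $ i))"

definition hpd :: "complex^'n^'n \<Rightarrow> bool" where
  "hpd W \<longleftrightarrow> hermitian W \<and> (\<forall>x. x \<noteq> 0 \<longrightarrow> 0 < Re (cinner x (W *v x)))"

text \<open>Lanczos state after k steps: (q_k, q_(k+1), b_(k-1)), with q_0 = 0, b_(-1) = 1.\<close>
fun lanczos_state :: "complex^'n^'n \<Rightarrow> complex^'n \<Rightarrow> nat \<Rightarrow> (complex^'n) \<times> (complex^'n) \<times> real" where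
  "lanczos_state W q1 0 = (0, q1, 1)"
| "lanczos_state W q1 (Suc k) =
     (let (qp, qc, bp) = lanczos_state W q1 k;
          a = cinner (W *v qc - of_real bp *s qp) qc;
          v = W *v qc - a *s qc - of_real bp *s qp;
          bn = norm v
      in (qc, (1 / of_real bn) *s v, bn))"

text \<open>q_k (k >= 1): the k-th Lanczos vector.\<close>
definition lanczos_q :: "complex^'n^'n \<Rightarrow> complex^'n \<Rightarrow> nat \<Rightarrow> complex^'n" where
  "lanczos_q W q1 k = fst (snd (lanczos_state W q1 (k - 1)))"

definition lanczos_a :: "complex^'n^'n \<Rightarrow> complex^'n \<Rightarrow> nat \<Rightarrow> complex" where
  "lanczos_a W q1 k = (let (qp, qc, bp) = lanczos_state W q1 k in
      cinner (W *v qc - of_real bp *s qp) qc)"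

definition lanczos_b :: "complex^'n^'n \<Rightarrow> complex^'n \<Rightarrow> nat \<Rightarrow> real" where
  "lanczos_b W q1 k = snd (snd (lanczos_state W q1 (Suc k)))"

definition lanczos_terminates_at :: "complex^'n^'n \<Rightarrow> complex^'n \<Rightarrow> nat \<Rightarrow> bool" where
  "lanczos_terminates_at W q1 n \<longleftrightarrow>
     1 \<le> n \<and> lanczos_b W q1 (n - 1) = 0 \<and> (\<forall>j < n - 1. lanczos_b W q1 j \<noteq> 0)"

text \<open>The Jacobi matrix T(W,q1) (0-based indices i,j < n).\<close>
definition jacobi_T :: "complex^'n^'n \<Rightarrow> complex^'n \<Rightarrow> nat \<Rightarrow> nat \<Rightarrow> complex" where
  "jacobi_T W q1 i j =
     (if i = j then lanczos_a W q1 i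
      else if i = j + 1 then of_real (lanczos_b W q1 j)
      else if j = i + 1 then of_real (lanczos_b W q1 i)
      else 0)"

definition bidiag_H :: "(nat \<Rightarrow> real) \<Rightarrow> (nat \<Rightarrow> real) \<Rightarrow> nat \<Rightarrow> nat \<Rightarrow> real" where
  "bidiag_H \<alpha> \<beta> i j = (if i = j then \<alpha> i else if i = j + 1 then \<beta> j else 0)"

definition fmat_inv :: "nat \<Rightarrow> (nat \<Rightarrow> nat \<Rightarrow> real) \<Rightarrow> nat \<Rightarrow> nat \<Rightarrow> real" where
  "fmat_inv m A = (THE B. (\<forall>i<m. \<forall>j<m. (\<Sum>l<m. A i l * B l j) = (if i = j then 1 else 0)
                         \<and> (\<Sum>l<m. B i l * A l j) = (if i = j then 1 else 0))
                    \<and> (\<forall>i j. \<not> (i < m \<and> j < m) \<longrightarrow> B i j = 0))"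

definition krylov :: "complex^'n^'n \<Rightarrow> complex^'n \<Rightarrow> nat \<Rightarrow> (complex^'n) set" where
  "krylov W b k = {y. \<exists>c :: nat \<Rightarrow> complex. y = (\<Sum>j<k. c j *s (((*v) W ^^ j) b))}"

definition Wnorm :: "complex^'n^'n \<Rightarrow> complex^'n \<Rightarrow> real" where
  "Wnorm W y = sqrt (Re (cinner y (W *v y)))"

definition cga_iterate :: "complex^'n^'n \<Rightarrow> complex^'n \<Rightarrow> nat \<Rightarrow> complex^'n" where
  "cga_iterate W b k = (SOME xk. xk \<in> krylov W b k \<and>
      (\<forall>y \<in> krylov W b k. Wnorm W (matrix_inv W *v b - xk) \<le> Wnorm W (matrix_inv W *v b - y)))"

definition minres_iterate :: "complex^'n^'n \<Rightarrow> complex^'n \<Rightarrow> nat \<Rightarrow> complex^'n" where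
  "minres_iterate W b k = (SOME xk. xk \<in> krylov W b k \<and>
      (\<forall>y \<in> krylov W b k. norm (b - W *v xk) \<le> norm (b - W *v y)))"

end

theory Submission
  imports Defs
begin

(* In the orthonormal Lanczos basis q_1, ..., q_n the operator W acts as the Jacobi matrix
   T = H H^T, and K_k consists of the coefficient vectors supported on the first k coordinates.
   With g = H^-1 f_1, the solution has coordinates H^-T g, so the W-norm error of the candidate
   with coordinates c is |g - H^T c| and its residual has coordinates H (g - H^T c).  Since H^T
   is upper bidiagonal, H^T c is again supported on the first k coordinates: the CG iterate
   matches g there, its error is the tail of g, and its residual has the single entry
   alpha_k g_k.  For MINRES, the vector z with z_j = 1 / (alpha_j g_j) for j <= k satisfies
   H^T z = 0 on the first k coordinates and z_1 = 1, so every admissible residual r has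
   z^* r = 1 and |r| >= 1 / |z|; a convex combination of CG iterates attains this bound. *)

section \<open>The complex inner product and Hermitian matrices\<close>

lemma cinner_diff_right: "cinner y (x - z) = cinner y x - cinner y z"
  by (simp add: cinner_def right_diff_distrib sum_subtractf)

lemma cinner_add_left: "cinner (y + z) x = cinner y x + cinner z x"
  by (simp add: cinner_def distrib_right sum.distrib)

lemma cinner_diff_left: "cinner (y - z) x = cinner y x - cinner z x"
  by (simp add: cinner_def left_diff_distrib sum_subtractf)

lemma cinner_scale_right: "cinner y (c *s x) = c * cinner y x"
  by (simp add: cinner_def sum_distrib_left algebra_simps)

lemma cinner_scale_left: "cinner (c *s y) x = cnj c * cinner y x"
  by (simp add: cinner_def sum_distrib_left algebra_simps)

lemma cinner_sum_right: "cinner y (\<Sum>i\<in>A. f i) = (\<Sum>i\<in>A. cinner y (f i))"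
  by (simp add: cinner_def sum_distrib_left sum.swap[of _ A])

lemma cinner_sum_left: "cinner (\<Sum>i\<in>A. f i) x = (\<Sum>i\<in>A. cinner (f i) x)"
  by (simp add: cinner_def sum_distrib_right sum.swap[of _ A])

lemma cinner_zero_right [simp]: "cinner x 0 = 0"
  by (simp add: cinner_def)

lemma cnj_cinner: "cnj (cinner x y) = cinner y x"
  by (simp add: cinner_def mult.commute)

lemma cinner_self_eq_norm_sq: "cinner x x = of_real ((norm x)\<^sup>2)"
proof -
  have "cinner x x = (\<Sum>i\<in>UNIV. of_real ((norm (x $ i))\<^sup>2))"
    unfolding cinner_def by (intro sum.cong refl) (simp only: complex_norm_square mult.commute)
  also have "\<dots> = of_real ((norm x)\<^sup>2)"
    by (simp add: norm_vec_def L2_set_def sum_nonneg)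
  finally show ?thesis .
qed

lemma hermitian_cinner_commute:
  assumes "hermitian W"
  shows "cinner y (W *v x) = cinner (W *v y) x"
proof -
  have W: "cnj (W $ j $ i) = W $ i $ j" for i j
    using assms unfolding hermitian_def by metis
  have "cinner y (W *v x) = (\<Sum>i\<in>UNIV. \<Sum>j\<in>UNIV. cnj (y $ i) * W $ i $ j * x $ j)"
    by (simp add: cinner_def matrix_vector_mult_def sum_distrib_left mult.assoc)
  also have "\<dots> = (\<Sum>j\<in>UNIV. \<Sum>i\<in>UNIV. cnj (y $ i) * W $ i $ j * x $ j)"
    by (rule sum.swap)
  also have "\<dots> = cinner (W *v y) x"
    by (simp add: cinner_def matrix_vector_mult_def sum_distrib_left sum_distrib_right W mult_ac)
  finally show ?thesis .
qed

lemma hpd_invertible: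
  fixes W :: "complex^'n^'n"
  assumes "hpd W"
  shows "invertible W"
proof -
  have "x = 0" if "W *v x = 0" for x :: "complex^'n"
    using assms that unfolding hpd_def by force
  then show ?thesis
    using matrix_left_invertible_ker invertible_left_inverse by blast
qed

lemma matrix_inv_mult_eq:
  assumes "invertible W" "W *v x = y"
  shows "matrix_inv W *v y = x"
proof -
  have "W ** matrix_inv W = mat 1 \<and> matrix_inv W ** W = mat 1"
    using assms(1) unfolding invertible_def matrix_inv_def by (rule someI_ex)
  then show ?thesis
    using assms(2) by (metis matrix_vector_mul_assoc matrix_vector_mul_lid)
qed

section \<open>Krylov spaces and optimal iterates\<close>

lemma krylov_memI: "(\<Sum>j<k. c j *s ((*v) W ^^ j) b) \<in> krylov W b k"
  unfolding krylov_def by blast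

lemma krylov_memE:
  assumes "y \<in> krylov W b k"
  obtains c where "y = (\<Sum>j<k. c j *s ((*v) W ^^ j) b)"
  using assms unfolding krylov_def by blast

lemma zero_in_krylov: "0 \<in> krylov W b k"
  using krylov_memI[of "\<lambda>_. 0"] by simp

lemma krylov_add:
  assumes "x \<in> krylov W b k" "y \<in> krylov W b k"
  shows "x + y \<in> krylov W b k"
proof -
  obtain c where x: "x = (\<Sum>j<k. c j *s ((*v) W ^^ j) b)"
    using assms(1) by (rule krylov_memE)
  obtain d where y: "y = (\<Sum>j<k. d j *s ((*v) W ^^ j) b)"
    using assms(2) by (rule krylov_memE)
  have "x + y = (\<Sum>j<k. (c j + d j) *s ((*v) W ^^ j) b)"
    unfolding x y by (simp add: sum.distrib)
  then show ?thesis
    by (simp only: krylov_memI)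
qed

lemma krylov_scale:
  assumes "x \<in> krylov W b k"
  shows "c *s x \<in> krylov W b k"
proof -
  obtain d where x: "x = (\<Sum>j<k. d j *s ((*v) W ^^ j) b)"
    using assms by (rule krylov_memE)
  have "c *s x = (\<Sum>j<k. (c * d j) *s ((*v) W ^^ j) b)"
    unfolding x by (simp add: vec.scale_sum_right)
  then show ?thesis
    by (simp only: krylov_memI)
qed

lemma krylov_diff: "x \<in> krylov W b k \<Longrightarrow> y \<in> krylov W b k \<Longrightarrow> x - y \<in> krylov W b k"
  using krylov_add[of x W b k "(-1) *s y"] krylov_scale[of y W b k "-1"]
  by (simp add: vector_smult_lneg)

lemma krylov_sum:
  "finite A \<Longrightarrow> (\<And>i. i \<in> A \<Longrightarrow> f i \<in> krylov W b k) \<Longrightarrow> sum f A \<in> krylov W b k"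
  by (induction A rule: finite_induct) (auto intro: krylov_add zero_in_krylov)

lemma krylov_mono:
  assumes "k \<le> k'" "x \<in> krylov W b k"
  shows "x \<in> krylov W b k'"
proof -
  obtain c where "x = (\<Sum>j<k. c j *s ((*v) W ^^ j) b)"
    using assms(2) by (rule krylov_memE)
  also have "\<dots> = (\<Sum>j<k'. (if j < k then c j else 0) *s ((*v) W ^^ j) b)"
    using assms(1) by (intro sum.mono_neutral_cong_left) auto
  finally show ?thesis
    by (simp only: krylov_memI)
qed

lemma krylov_mult:
  assumes "x \<in> krylov W b k"
  shows "W *v x \<in> krylov W b (Suc k)"
proof -
  obtain c where "x = (\<Sum>j<k. c j *s ((*v) W ^^ j) b)"
    using assms by (rule krylov_memE)
  then have "W *v x = (\<Sum>j<k. c j *s ((*v) W ^^ Suc j) b)"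
    by (simp add: vec.sum vec.scale)
  also have "\<dots> = (\<Sum>j<Suc k. (if j = 0 then 0 else c (j - 1)) *s ((*v) W ^^ j) b)"
    unfolding sum.lessThan_Suc_shift by (simp del: funpow.simps)
  finally show ?thesis
    by (simp only: krylov_memI)
qed

lemma start_in_krylov: "b \<in> krylov W b (Suc 0)"
  using krylov_memI[where c="\<lambda>_. 1" and k="Suc 0"] by simp

lemma cga_iterate_minimal:
  assumes "y \<in> krylov W b k"
    and "\<forall>y'\<in>krylov W b k. Wnorm W (matrix_inv W *v b - y) \<le> Wnorm W (matrix_inv W *v b - y')"
  shows "cga_iterate W b k \<in> krylov W b k"
    and "Wnorm W (matrix_inv W *v b - cga_iterate W b k) \<le> Wnorm W (matrix_inv W *v b - y)"
  using someI[where P = "\<lambda>x. x \<in> krylov W b k \<and> (\<forall>y'\<in>krylov W b k.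
      Wnorm W (matrix_inv W *v b - x) \<le> Wnorm W (matrix_inv W *v b - y'))"] assms
  unfolding cga_iterate_def by blast+

lemma minres_iterate_minimal:
  assumes "y \<in> krylov W b k" and "\<forall>y'\<in>krylov W b k. norm (b - W *v y) \<le> norm (b - W *v y')"
  shows "minres_iterate W b k \<in> krylov W b k"
    and "norm (b - W *v minres_iterate W b k) \<le> norm (b - W *v y)"
  using someI[where P = "\<lambda>x. x \<in> krylov W b k \<and>
      (\<forall>y'\<in>krylov W b k. norm (b - W *v x) \<le> norm (b - W *v y'))"] assms
  unfolding minres_iterate_def by blast+

section \<open>Inverses of Gram matrices and of bidiagonal matrices\<close>

lemma fmat_left_inverse_eq_right_inverse:
  fixes A B C :: "nat \<Rightarrow> nat \<Rightarrow> real"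
  assumes left: "\<forall>i<m. \<forall>j<m. (\<Sum>l<m. C i l * A l j) = (if i = j then 1 else 0)"
    and right: "\<forall>i<m. \<forall>j<m. (\<Sum>l<m. A i l * B l j) = (if i = j then 1 else 0)"
    and "i < m" "j < m"
  shows "C i j = B i j"
proof -
  have "C i j = (\<Sum>l<m. C i l * (\<Sum>t<m. A l t * B t j))"
    using right \<open>j < m\<close> by (simp add: if_distrib[of "(*) _"] cong: if_cong)
  also have "\<dots> = (\<Sum>t<m. (\<Sum>l<m. C i l * A l t) * B t j)"
    by (simp only: sum_distrib_left sum_distrib_right mult.assoc) (rule sum.swap)
  also have "\<dots> = B i j"
    using left \<open>i < m\<close> by (simp add: if_distrib[of "\<lambda>x. x * _"] cong: if_cong)
  finally show ?thesis .
qed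

lemma fmat_inv_eqI:
  fixes A B :: "nat \<Rightarrow> nat \<Rightarrow> real"
  assumes right: "\<forall>i<m. \<forall>j<m. (\<Sum>l<m. A i l * B l j) = (if i = j then 1 else 0)"
    and symmetric: "\<forall>i j. A i j = A j i" "\<forall>i j. B i j = B j i"
    and outside: "\<forall>i j. \<not> (i < m \<and> j < m) \<longrightarrow> B i j = 0"
  shows "fmat_inv m A = B"
proof -
  have "(\<Sum>l<m. B i l * A l j) = (\<Sum>l<m. A j l * B l i)" for i j
    by (intro sum.cong refl) (metis symmetric mult.commute)
  then have left: "\<forall>i<m. \<forall>j<m. (\<Sum>l<m. B i l * A l j) = (if i = j then 1 else 0)"
    using right by auto
  show ?thesis
    unfolding fmat_inv_def
  proof (rule the_equality)
    fix C
    assume C: "(\<forall>i<m. \<forall>j<m. (\<Sum>l<m. A i l * C l j) = (if i = j then 1 else 0)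
                 \<and> (\<Sum>l<m. C i l * A l j) = (if i = j then 1 else 0))
               \<and> (\<forall>i j. \<not> (i < m \<and> j < m) \<longrightarrow> C i j = 0)"
    show "C = B"
    proof (intro ext)
      fix i j
      show "C i j = B i j"
        using fmat_left_inverse_eq_right_inverse[OF _ right, of C i j] C outside by metis
    qed
  qed (use right left outside in blast)
qed

lemma fmat_inv_gram:
  fixes H G :: "nat \<Rightarrow> nat \<Rightarrow> real"
  assumes GH: "\<forall>i<m. \<forall>j<m. (\<Sum>l<m. G i l * H l j) = (if i = j then 1 else 0)"
    and HG: "\<forall>i<m. \<forall>j<m. (\<Sum>l<m. H i l * G l j) = (if i = j then 1 else 0)"
    and "i < m" "j < m"
  shows "fmat_inv m (\<lambda>i j. \<Sum>l<m. H i l * H j l) i j = (\<Sum>t<m. G t i * G t j)"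
proof -
  define B where "B i j = (if i < m \<and> j < m then \<Sum>t<m. G t i * G t j else 0)" for i j
  have "(\<Sum>l<m. (\<Sum>s<m. H i s * H l s) * B l j) = (if i = j then 1 else 0)"
    if "i < m" "j < m" for i j
  proof -
    have "(\<Sum>l<m. (\<Sum>s<m. H i s * H l s) * B l j)
        = (\<Sum>l<m. \<Sum>s<m. \<Sum>t<m. H i s * (G t l * (H l s * G t j)))"
      using \<open>j < m\<close> unfolding B_def
      by (intro sum.cong refl) (simp add: sum_distrib_left sum_distrib_right mult_ac)
    also have "\<dots> = (\<Sum>s<m. \<Sum>l<m. \<Sum>t<m. H i s * (G t l * (H l s * G t j)))"
      by (rule sum.swap)
    also have "\<dots> = (\<Sum>s<m. \<Sum>t<m. \<Sum>l<m. H i s * (G t l * (H l s * G t j)))"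
      by (rule sum.cong[OF refl], rule sum.swap)
    also have "\<dots> = (\<Sum>s<m. H i s * (\<Sum>t<m. (\<Sum>l<m. G t l * H l s) * G t j))"
      by (simp only: sum_distrib_left sum_distrib_right mult.assoc)
    also have "\<dots> = (\<Sum>s<m. H i s * G s j)"
      using GH by (simp add: if_distrib[of "\<lambda>x. x * _"] cong: if_cong)
    finally show ?thesis
      using HG that by simp
  qed
  then have "fmat_inv m (\<lambda>i j. \<Sum>l<m. H i l * H j l) = B"
    by (intro fmat_inv_eqI) (auto simp: B_def mult.commute)
  then show ?thesis
    using assms by (simp add: B_def)
qed

definition bidiag_inv :: "(nat \<Rightarrow> real) \<Rightarrow> (nat \<Rightarrow> real) \<Rightarrow> nat \<Rightarrow> nat \<Rightarrow> real" where
  "bidiag_inv \<alpha> \<beta> i j =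
     (if j \<le> i then (-1) ^ (i - j) * (\<Prod>l\<in>{j..<i}. \<beta> l) / (\<Prod>l\<in>{j..i}. \<alpha> l) else 0)"

lemma sum_bidiag_H_col:
  fixes f :: "nat \<Rightarrow> 'a::real_algebra_1"
  assumes "j < m"
  shows "(\<Sum>l<m. of_real (bidiag_H \<alpha> \<beta> l j) * f l)
       = of_real (\<alpha> j) * f j + (if Suc j < m then of_real (\<beta> j) * f (Suc j) else 0)"
proof -
  have "(\<Sum>l<m. of_real (bidiag_H \<alpha> \<beta> l j) * f l)
      = (\<Sum>l<m. (if l = j then of_real (\<alpha> j) * f j else 0)
               + (if l = Suc j then of_real (\<beta> j) * f (Suc j) else 0))"
    by (intro sum.cong refl) (auto simp: bidiag_H_def)
  then show ?thesis
    using assms by (simp add: sum.distrib)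
qed

lemma sum_bidiag_H_row:
  fixes f :: "nat \<Rightarrow> 'a::real_algebra_1"
  assumes "i < m"
  shows "(\<Sum>l<m. of_real (bidiag_H \<alpha> \<beta> i l) * f l)
       = of_real (\<alpha> i) * f i + (if 0 < i then of_real (\<beta> (i - 1)) * f (i - 1) else 0)"
proof -
  have "(\<Sum>l<m. of_real (bidiag_H \<alpha> \<beta> i l) * f l)
      = (\<Sum>l<m. (if l = i then of_real (\<alpha> i) * f i else 0)
               + (if 0 < i \<and> l = i - 1 then of_real (\<beta> (i - 1)) * f (i - 1) else 0))"
    by (intro sum.cong refl) (auto simp: bidiag_H_def)
  then show ?thesis
    using assms by (auto simp: sum.distrib)
qed

lemma sum_bidiag_H_col_real:
  fixes f :: "nat \<Rightarrow> real"
  assumes "j < m"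
  shows "(\<Sum>l<m. bidiag_H \<alpha> \<beta> l j * f l) = \<alpha> j * f j + (if Suc j < m then \<beta> j * f (Suc j) else 0)"
  using sum_bidiag_H_col[OF assms, of \<alpha> \<beta> f] by simp

lemma sum_bidiag_H_row_real:
  fixes f :: "nat \<Rightarrow> real"
  assumes "i < m"
  shows "(\<Sum>l<m. bidiag_H \<alpha> \<beta> i l * f l) = \<alpha> i * f i + (if 0 < i then \<beta> (i - 1) * f (i - 1) else 0)"
  using sum_bidiag_H_row[OF assms, of \<alpha> \<beta> f] by simp

lemma bidiag_inv_upper [simp]: "i < j \<Longrightarrow> bidiag_inv \<alpha> \<beta> i j = 0"
  by (simp add: bidiag_inv_def)

lemma bidiag_inv_diag [simp]: "bidiag_inv \<alpha> \<beta> i i = 1 / \<alpha> i"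
  by (simp add: bidiag_inv_def)

lemma bidiag_inv_col_step:
  assumes "j < i" "\<alpha> j \<noteq> 0"
  shows "\<alpha> j * bidiag_inv \<alpha> \<beta> i j + \<beta> j * bidiag_inv \<alpha> \<beta> i (Suc j) = 0"
proof -
  have "(\<Prod>l\<in>{j..<i}. \<beta> l) = \<beta> j * (\<Prod>l\<in>{Suc j..<i}. \<beta> l)"
    using assms by (simp add: prod.atLeast_Suc_lessThan)
  moreover have "(\<Prod>l\<in>{j..i}. \<alpha> l) = \<alpha> j * (\<Prod>l\<in>{Suc j..i}. \<alpha> l)"
    using assms by (simp add: prod.atLeast_Suc_atMost)
  moreover have "(-1::real) ^ (i - j) = - ((-1) ^ (i - Suc j))"
    using assms by (metis Suc_diff_Suc mult_minus1 power_Suc)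
  ultimately show ?thesis
    using assms unfolding bidiag_inv_def by (simp add: field_simps)
qed

lemma bidiag_inv_row_step:
  assumes "j < Suc i" "\<alpha> (Suc i) \<noteq> 0"
  shows "\<alpha> (Suc i) * bidiag_inv \<alpha> \<beta> (Suc i) j + \<beta> i * bidiag_inv \<alpha> \<beta> i j = 0"
proof -
  have "(\<Prod>l\<in>{j..<Suc i}. \<beta> l) = (\<Prod>l\<in>{j..<i}. \<beta> l) * \<beta> i"
    using assms by (simp add: prod.atLeastLessThan_Suc)
  moreover have "(\<Prod>l\<in>{j..Suc i}. \<alpha> l) = (\<Prod>l\<in>{j..i}. \<alpha> l) * \<alpha> (Suc i)"
    using assms by (simp add: prod.nat_ivl_Suc')
  moreover have "(-1::real) ^ (Suc i - j) = - ((-1) ^ (i - j))"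
    using assms by (simp add: Suc_diff_le)
  ultimately show ?thesis
    using assms unfolding bidiag_inv_def by (simp add: field_simps)
qed

lemma bidiag_inv_mult_bidiag:
  assumes "i < m" "j < m" "\<forall>l<m. \<alpha> l \<noteq> 0"
  shows "(\<Sum>l<m. bidiag_inv \<alpha> \<beta> i l * bidiag_H \<alpha> \<beta> l j) = (if i = j then 1 else 0)"
proof -
  have "(\<Sum>l<m. bidiag_inv \<alpha> \<beta> i l * bidiag_H \<alpha> \<beta> l j)
      = \<alpha> j * bidiag_inv \<alpha> \<beta> i j + (if Suc j < m then \<beta> j * bidiag_inv \<alpha> \<beta> i (Suc j) else 0)"
    using sum_bidiag_H_col_real[OF assms(2), of \<alpha> \<beta> "bidiag_inv \<alpha> \<beta> i"]
    by (simp only: mult.commute)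
  then show ?thesis
    using assms bidiag_inv_col_step[of j i \<alpha> \<beta>] by (cases "j < i") auto
qed

lemma bidiag_mult_bidiag_inv:
  assumes "i < m" "j < m" "\<forall>l<m. \<alpha> l \<noteq> 0"
  shows "(\<Sum>l<m. bidiag_H \<alpha> \<beta> i l * bidiag_inv \<alpha> \<beta> l j) = (if i = j then 1 else 0)"
proof -
  have "(\<Sum>l<m. bidiag_H \<alpha> \<beta> i l * bidiag_inv \<alpha> \<beta> l j)
      = \<alpha> i * bidiag_inv \<alpha> \<beta> i j + (if 0 < i then \<beta> (i - 1) * bidiag_inv \<alpha> \<beta> (i - 1) j else 0)"
    using sum_bidiag_H_row_real[OF assms(1)] .
  then show ?thesis
    using assms bidiag_inv_row_step[of j "i - 1" \<alpha> \<beta>] by (cases "j < i") auto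
qed

lemma bidiag_inv_first_col:
  assumes "\<alpha> j \<noteq> 0"
  shows "\<alpha> j * bidiag_inv \<alpha> \<beta> j 0 = (-1) ^ j * (\<Prod>l<j. \<beta> l / \<alpha> l)"
proof -
  have "(\<Prod>l\<in>{0..j}. \<alpha> l) = (\<Prod>l<j. \<alpha> l) * \<alpha> j"
    by (simp add: atLeast0AtMost lessThan_Suc_atMost[symmetric])
  then show ?thesis
    using assms unfolding bidiag_inv_def by (simp add: atLeast0LessThan prod_dividef)
qed

lemma bidiag_H_shift:
  "bidiag_H \<alpha> \<beta> (k + i) (k + j) = bidiag_H (\<lambda>i. \<alpha> (k + i)) (\<lambda>i. \<beta> (k + i)) i j"
  by (simp add: bidiag_H_def)

lemma fmat_inv_bidiag_gram:
  assumes "0 < m" "\<forall>l<m. \<alpha> l \<noteq> 0"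
  shows "fmat_inv m (\<lambda>i j. \<Sum>l<m. bidiag_H \<alpha> \<beta> i l * bidiag_H \<alpha> \<beta> j l) 0 0
       = (\<Sum>l<m. (bidiag_inv \<alpha> \<beta> l 0)\<^sup>2)"
  using fmat_inv_gram[of m "bidiag_inv \<alpha> \<beta>" "bidiag_H \<alpha> \<beta>" 0 0] assms
    bidiag_inv_mult_bidiag bidiag_mult_bidiag_inv
  by (simp add: power2_eq_square)

section \<open>The Lanczos basis\<close>

definition supported_below :: "nat \<Rightarrow> (nat \<Rightarrow> complex) set" where
  "supported_below k = {c. \<forall>i\<ge>k. c i = 0}"

locale lanczos =
  fixes W :: "complex^'N^'N" and b :: "complex^'N" and n :: nat
  assumes hermitian: "hermitian W"
    and unit_start: "norm b = 1"
    and terminates: "lanczos_terminates_at W b n"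
begin

abbreviation "la k \<equiv> lanczos_a W b k"
abbreviation "lb k \<equiv> lanczos_b W b k"

(* Indices are shifted by one with respect to the paper: q k is q_(k+1), so the Lanczos basis
   is q 0 = b, ..., q (n - 1). *)

definition q :: "nat \<Rightarrow> complex^'N" where
  "q k = fst (snd (lanczos_state W b k))"

definition q_prev :: "nat \<Rightarrow> complex^'N" where
  "q_prev k = fst (lanczos_state W b k)"

definition b_prev :: "nat \<Rightarrow> real" where
  "b_prev k = snd (snd (lanczos_state W b k))"

definition lanczos_v :: "nat \<Rightarrow> complex^'N" where
  "lanczos_v k = W *v q k - la k *s q k - of_real (b_prev k) *s q_prev k"

definition q_back :: "nat \<Rightarrow> complex^'N" where
  "q_back k = (if k = 0 then 0 else of_real (lb (k - 1)) *s q (k - 1))"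

lemma lanczos_state_eq: "lanczos_state W b k = (q_prev k, q k, b_prev k)"
  by (simp add: q_def q_prev_def b_prev_def)

lemma lanczos_a_eq: "la k = cinner (W *v q k - of_real (b_prev k) *s q_prev k) (q k)"
  by (simp add: lanczos_a_def lanczos_state_eq)

lemma lanczos_state_Suc:
  "lanczos_state W b (Suc k)
     = (q k, (1 / of_real (norm (lanczos_v k))) *s lanczos_v k, norm (lanczos_v k))"
  by (simp add: lanczos_state_eq[of k] lanczos_v_def lanczos_a_eq[symmetric] Let_def)

lemma lb_eq_norm: "lb k = norm (lanczos_v k)"
  by (simp add: lanczos_b_def lanczos_state_Suc del: lanczos_state.simps)

lemma q_Suc: "q (Suc k) = (1 / of_real (lb k)) *s lanczos_v k"
  by (simp add: q_def lb_eq_norm lanczos_state_Suc del: lanczos_state.simps)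

lemma q_back_eq: "q_back k = of_real (b_prev k) *s q_prev k"
proof (cases k)
  case 0
  then show ?thesis
    by (simp add: q_back_def q_prev_def b_prev_def)
next
  case (Suc k')
  then show ?thesis
    by (simp add: q_back_def q_prev_def b_prev_def lanczos_state_Suc lb_eq_norm
        del: lanczos_state.simps)
qed

lemma lanczos_v_eq: "lanczos_v k = W *v q k - la k *s q k - q_back k"
  by (simp add: lanczos_v_def q_back_eq)

lemma lanczos_a_eq_q_back: "la k = cinner (W *v q k - q_back k) (q k)"
  by (simp add: lanczos_a_eq q_back_eq)

lemma q_0: "q 0 = b"
  by (simp add: q_def)

lemma W_q_recurrence: "W *v q k = la k *s q k + q_back k + of_real (lb k) *s q (Suc k)"
proof -
  have "of_real (lb k) *s q (Suc k) = lanczos_v k"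
    by (cases "lb k = 0") (simp_all add: q_Suc lb_eq_norm)
  then show ?thesis
    by (simp add: lanczos_v_eq)
qed

lemma n_pos: "0 < n"
  using terminates by (simp add: lanczos_terminates_at_def)

lemma lb_last: "lb (n - 1) = 0"
  using terminates by (simp add: lanczos_terminates_at_def)

lemma lb_pos: "j < n - 1 \<Longrightarrow> 0 < lb j"
  using terminates lb_eq_norm[of j] norm_ge_zero[of "lanczos_v j"]
  unfolding lanczos_terminates_at_def by (metis order_le_less)

lemma cinner_q_q_back:
  assumes orth: "\<forall>i\<le>k. \<forall>j\<le>k. cinner (q i) (q j) = (if i = j then 1 else 0)" and "j \<le> k"
  shows "cinner (q j) (q_back k) = (if Suc j = k then of_real (lb j) else 0)"
  using assms by (auto simp: q_back_def cinner_scale_right)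

lemma cinner_q_lanczos_v:
  assumes orth: "\<forall>i\<le>k. \<forall>j\<le>k. cinner (q i) (q j) = (if i = j then 1 else 0)" and "j \<le> k"
  shows "cinner (q j) (lanczos_v k) = 0"
proof (cases "j = k")
  case True
  have q_back_orth: "cinner (q k) (q_back k) = 0" "cinner (q_back k) (q k) = 0"
    using cinner_q_q_back[OF orth, of k] cnj_cinner[of "q k" "q_back k"] by simp_all
  have "la k = cinner (q k) (W *v q k)"
    using hermitian_cinner_commute[OF hermitian, of "q k" "q k"]
    by (simp add: lanczos_a_eq_q_back cinner_diff_left q_back_orth)
  then show ?thesis
    using True orth q_back_orth by (simp add: lanczos_v_eq cinner_diff_right cinner_scale_right)
next
  case False
  then have "j < k"
    using \<open>j \<le> k\<close> by simp
  have "cinner (q j) (W *v q k) = cinner (W *v q j) (q k)"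
    by (rule hermitian_cinner_commute[OF hermitian])
  also have "\<dots> = (if Suc j = k then of_real (lb j) else 0)"
    using orth \<open>j < k\<close> cinner_q_q_back[OF orth, of "j - 1"] cnj_cinner[of "q_back j" "q k"]
    by (auto simp: W_q_recurrence[of j] q_back_def cinner_add_left cinner_scale_left)
  finally show ?thesis
    using orth \<open>j < k\<close> cinner_q_q_back[OF orth, of j]
    by (simp add: lanczos_v_eq cinner_diff_right cinner_scale_right)
qed

lemma q_orthonormal_upto:
  "k < n \<Longrightarrow> \<forall>i\<le>k. \<forall>j\<le>k. cinner (q i) (q j) = (if i = j then 1 else 0)"
proof (induction k)
  case 0
  show ?case
    using cinner_self_eq_norm_sq[of b] unit_start by (simp add: q_0)
next
  case (Suc k)
  then have orth: "\<forall>i\<le>k. \<forall>j\<le>k. cinner (q i) (q j) = (if i = j then 1 else 0)"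
    by simp
  have "lb k \<noteq> 0"
    using Suc.prems lb_pos[of k] by fastforce
  have new: "cinner (q j) (q (Suc k)) = 0" if "j \<le> k" for j
    using cinner_q_lanczos_v[OF orth that] by (simp add: q_Suc cinner_scale_right)
  have "cinner (q (Suc k)) (q (Suc k))
      = cnj (1 / of_real (lb k)) * (1 / of_real (lb k)) * cinner (lanczos_v k) (lanczos_v k)"
    by (simp add: q_Suc cinner_scale_left cinner_scale_right)
  also have "\<dots> = 1"
    using \<open>lb k \<noteq> 0\<close> by (simp add: cinner_self_eq_norm_sq lb_eq_norm power2_eq_square)
  finally have "cinner (q (Suc k)) (q (Suc k)) = 1" .
  moreover have "cinner (q (Suc k)) (q j) = 0" if "j \<le> k" for j
    using new[OF that] cnj_cinner[of "q j" "q (Suc k)"] by simp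
  ultimately show ?case
    using orth new by (auto simp: le_Suc_eq)
qed

lemma q_orthonormal: "i < n \<Longrightarrow> j < n \<Longrightarrow> cinner (q i) (q j) = (if i = j then 1 else 0)"
  using q_orthonormal_upto[of "n - 1"] n_pos by auto

lemma W_q_jacobi:
  assumes "j < n"
  shows "W *v q j = (\<Sum>i<n. jacobi_T W b i j *s q i)"
proof -
  have "(\<Sum>i<n. jacobi_T W b i j *s q i)
      = (\<Sum>i<n. (if i = j then la j *s q j else 0)
              + (if i = Suc j then of_real (lb j) *s q (Suc j) else 0)
              + (if 0 < j \<and> i = j - 1 then of_real (lb (j - 1)) *s q (j - 1) else 0))"
    by (intro sum.cong refl) (auto simp: jacobi_T_def)
  also have "\<dots> = la j *s q j + (if Suc j < n then of_real (lb j) *s q (Suc j) else 0) + q_back j"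
    using assms by (auto simp: sum.distrib q_back_def)
  also have "\<dots> = W *v q j"
  proof (cases "Suc j < n")
    case False
    then have "j = n - 1"
      using assms by simp
    then show ?thesis
      using lb_last False W_q_recurrence[of j] by simp
  qed (simp add: W_q_recurrence[of j])
  finally show ?thesis ..
qed

definition qcomb :: "(nat \<Rightarrow> complex) \<Rightarrow> complex^'N" where
  "qcomb c = (\<Sum>i<n. c i *s q i)"

definition Tmul :: "(nat \<Rightarrow> complex) \<Rightarrow> nat \<Rightarrow> complex" where
  "Tmul c i = (\<Sum>j<n. jacobi_T W b i j * c j)"

definition f1 :: "nat \<Rightarrow> complex" where
  "f1 i = (if i = 0 then 1 else 0)"

lemma cinner_qcomb: "cinner (qcomb c) (qcomb d) = (\<Sum>i<n. cnj (c i) * d i)"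
proof -
  have "cinner (qcomb c) (qcomb d) = (\<Sum>i<n. cnj (c i) * cinner (q i) (qcomb d))"
    by (simp only: qcomb_def cinner_sum_left cinner_scale_left)
  also have "\<dots> = (\<Sum>i<n. cnj (c i) * (\<Sum>j<n. d j * cinner (q i) (q j)))"
    by (simp only: qcomb_def cinner_sum_right cinner_scale_right)
  also have "\<dots> = (\<Sum>i<n. cnj (c i) * d i)"
    by (intro sum.cong refl) (simp add: q_orthonormal if_distrib[of "(*) _"] cong: if_cong)
  finally show ?thesis .
qed

lemma norm_qcomb: "norm (qcomb c) = L2_set (\<lambda>i. norm (c i)) {..<n}"
proof -
  have "of_real ((norm (qcomb c))\<^sup>2) = cinner (qcomb c) (qcomb c)"
    by (simp add: cinner_self_eq_norm_sq)
  also have "\<dots> = (\<Sum>i<n. of_real ((norm (c i))\<^sup>2))"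
    by (simp only: cinner_qcomb complex_norm_square mult.commute)
  finally have "of_real ((norm (qcomb c))\<^sup>2) = (of_real (\<Sum>i<n. (norm (c i))\<^sup>2) :: complex)"
    by simp
  then have "(norm (qcomb c))\<^sup>2 = (\<Sum>i<n. (norm (c i))\<^sup>2)"
    using of_real_eq_iff by blast
  then show ?thesis
    unfolding L2_set_def by (metis norm_ge_zero real_sqrt_unique)
qed

lemma qcomb_diff: "qcomb (\<lambda>i. c i - d i) = qcomb c - qcomb d"
  by (simp add: qcomb_def sum_subtractf scalar_mult_eq_scaleR scaleR_left_diff_distrib)

lemma qcomb_cong: "(\<And>i. i < n \<Longrightarrow> c i = d i) \<Longrightarrow> qcomb c = qcomb d"
  unfolding qcomb_def by (intro sum.cong) auto

lemma qcomb_linear: "(\<Sum>j\<in>A. c j *s qcomb (f j)) = qcomb (\<lambda>i. \<Sum>j\<in>A. c j * f j i)"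
  by (simp add: qcomb_def vec.scale_sum_right vec.scale_sum_left sum.swap[of _ A])

lemma qcomb_f1: "qcomb f1 = b"
  using n_pos by (simp add: qcomb_def f1_def q_0 if_distrib[of "\<lambda>c. c *s _"] cong: if_cong)

lemma norm_qcomb_single:
  assumes "j < n"
  shows "norm (qcomb (\<lambda>i. if i = j then x else 0)) = norm x"
  using assms by (simp add: norm_qcomb L2_set_def if_distrib[of norm] if_distrib[of "\<lambda>t. t\<^sup>2"]
      cong: if_cong)

lemma W_qcomb: "W *v qcomb c = qcomb (Tmul c)"
proof -
  have "W *v qcomb c = (\<Sum>j<n. c j *s (W *v q j))"
    by (simp add: qcomb_def vec.sum vec.scale)
  also have "\<dots> = (\<Sum>j<n. \<Sum>i<n. (jacobi_T W b i j * c j) *s q i)"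
    by (intro sum.cong refl) (simp add: W_q_jacobi vec.scale_sum_right mult.commute)
  also have "\<dots> = qcomb (Tmul c)"
    unfolding qcomb_def Tmul_def vec.scale_sum_left by (rule sum.swap)
  finally show ?thesis .
qed

lemma q_in_krylov: "q i \<in> krylov W b (Suc i)"
proof (induction i rule: less_induct)
  case (less i)
  show ?case
  proof (cases i)
    case 0
    then show ?thesis
      using start_in_krylov by (simp add: q_0)
  next
    case (Suc k)
    have q_k: "q k \<in> krylov W b (Suc (Suc k))"
      using less.IH[of k] Suc krylov_mono[of "Suc k" "Suc (Suc k)"] by simp
    have "q_back k \<in> krylov W b (Suc (Suc k))"
    proof (cases k)
      case (Suc k')
      then have "q k' \<in> krylov W b (Suc (Suc k))"
        using less.IH[of k'] \<open>i = Suc k\<close> krylov_mono[of "Suc k'" "Suc (Suc k)"] by simp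
      then show ?thesis
        using Suc by (simp add: q_back_def krylov_scale)
    qed (simp add: q_back_def zero_in_krylov)
    moreover have "W *v q k \<in> krylov W b (Suc (Suc k))"
      using less.IH[of k] Suc krylov_mult by simp
    ultimately have "lanczos_v k \<in> krylov W b (Suc (Suc k))"
      unfolding lanczos_v_eq using q_k by (intro krylov_diff krylov_scale)
    then show ?thesis
      using Suc by (simp add: q_Suc krylov_scale)
  qed
qed

lemma qcomb_in_krylov:
  assumes "k \<le> n" "c \<in> supported_below k"
  shows "qcomb c \<in> krylov W b k"
proof -
  have "qcomb c = (\<Sum>i<k. c i *s q i)"
    unfolding qcomb_def using assms
    by (intro sum.mono_neutral_cong_right) (auto simp: supported_below_def)
  also have "\<dots> \<in> krylov W b k"
    using krylov_mono[OF _ q_in_krylov] by (intro krylov_sum krylov_scale) (simp_all add: Suc_le_eq)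
  finally show ?thesis .
qed

lemma Tmul_power_f1_vanishing: "j < i \<Longrightarrow> (Tmul ^^ j) f1 i = 0"
proof (induction j arbitrary: i)
  case 0
  then show ?case
    by (simp add: f1_def)
next
  case (Suc j)
  have vanish: "jacobi_T W b i l * (Tmul ^^ j) f1 l = 0" for l
    using Suc by (cases "j < l") (auto simp: jacobi_T_def)
  show ?case
    by (simp only: funpow.simps comp_def Tmul_def[of "(Tmul ^^ j) f1"] vanish sum.neutral_const)
qed

lemma W_power_start: "((*v) W ^^ j) b = qcomb ((Tmul ^^ j) f1)"
  by (induction j) (simp_all add: qcomb_f1 W_qcomb)

lemma krylov_eq_qcomb_image:
  assumes "k \<le> n"
  shows "krylov W b k = qcomb ` supported_below k"
proof
  show "qcomb ` supported_below k \<subseteq> krylov W b k"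
    using qcomb_in_krylov[OF assms] by blast
next
  show "krylov W b k \<subseteq> qcomb ` supported_below k"
  proof
    fix y
    assume "y \<in> krylov W b k"
    then obtain c where "y = (\<Sum>j<k. c j *s ((*v) W ^^ j) b)"
      by (rule krylov_memE)
    then have "y = qcomb (\<lambda>i. \<Sum>j<k. c j * (Tmul ^^ j) f1 i)"
      unfolding W_power_start qcomb_linear .
    moreover have "(\<lambda>i. \<Sum>j<k. c j * (Tmul ^^ j) f1 i) \<in> supported_below k"
      unfolding supported_below_def by (auto intro!: sum.neutral simp: Tmul_power_f1_vanishing)
    ultimately show "y \<in> qcomb ` supported_below k"
      by blast
  qed
qed

end

section \<open>Coordinates relative to the Cholesky factor\<close>

locale lanczos_cholesky = lanczos W b n for W :: "complex^'N^'N" and b n +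
  fixes \<alpha> \<beta> :: "nat \<Rightarrow> real"
  assumes hpd: "hpd W"
    and alpha_pos: "\<forall>j<n. 0 < \<alpha> j"
    and cholesky: "\<forall>i<n. \<forall>j<n. jacobi_T W b i j
                     = of_real (\<Sum>l<n. bidiag_H \<alpha> \<beta> i l * bidiag_H \<alpha> \<beta> j l)"
begin

abbreviation "H \<equiv> bidiag_H \<alpha> \<beta>"

definition Hmul :: "(nat \<Rightarrow> complex) \<Rightarrow> nat \<Rightarrow> complex" where
  "Hmul w i = (\<Sum>l<n. of_real (H i l) * w l)"

definition Htmul :: "(nat \<Rightarrow> complex) \<Rightarrow> nat \<Rightarrow> complex" where
  "Htmul c l = (\<Sum>j<n. of_real (H j l) * c j)"

definition g :: "nat \<Rightarrow> real" where
  "g i = bidiag_inv \<alpha> \<beta> i 0"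

(* cg_coeffs k = H^-T applied to the first k entries of g: the coordinates of the k-th CG
   iterate, and for k = n those of the solution. *)
definition cg_coeffs :: "nat \<Rightarrow> nat \<Rightarrow> complex" where
  "cg_coeffs k l = of_real (\<Sum>m<k. bidiag_inv \<alpha> \<beta> m l * g m)"

lemma alpha_nonzero: "\<forall>l<n. \<alpha> l \<noteq> 0"
  using alpha_pos by force

lemma Tmul_eq_Hmul_Htmul:
  assumes "i < n"
  shows "Tmul c i = Hmul (Htmul c) i"
proof -
  have "Tmul c i = (\<Sum>j<n. \<Sum>l<n. of_real (H i l) * (of_real (H j l) * c j))"
    unfolding Tmul_def using assms cholesky
    by (intro sum.cong refl) (simp add: sum_distrib_right sum_distrib_left mult_ac)
  also have "\<dots> = Hmul (Htmul c) i"
    unfolding Hmul_def Htmul_def sum_distrib_left by (rule sum.swap)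
  finally show ?thesis .
qed

lemma beta_pos:
  assumes "Suc j < n"
  shows "0 < \<beta> j"
proof -
  have "(\<Sum>l<n. H (Suc j) l * H j l) = \<beta> j * \<alpha> j"
    using sum_bidiag_H_row_real[OF assms, of \<alpha> \<beta> "H j"] by (simp add: bidiag_H_def)
  moreover have "jacobi_T W b (Suc j) j = of_real (lb j)"
    by (simp add: jacobi_T_def)
  ultimately have "lb j = \<beta> j * \<alpha> j"
    using cholesky assms by (simp del: of_real_mult add: of_real_eq_iff[symmetric])
  moreover have "0 < lb j" "0 < \<alpha> j"
    using assms lb_pos[of j] alpha_pos by auto
  ultimately show ?thesis
    by (simp add: zero_less_mult_iff)
qed

lemma H_mult_g:
  assumes "i < n"
  shows "(\<Sum>l<n. H i l * g l) = (if i = 0 then 1 else 0)"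
  unfolding g_def using bidiag_mult_bidiag_inv[OF assms _ alpha_nonzero] n_pos by simp

lemma Hmul_g:
  assumes "i < n"
  shows "Hmul (\<lambda>l. of_real (g l)) i = f1 i"
proof -
  have "Hmul (\<lambda>l. of_real (g l)) i = of_real (\<Sum>l<n. H i l * g l)"
    unfolding Hmul_def by simp
  then show ?thesis
    using H_mult_g[OF assms] by (simp add: f1_def)
qed

lemma alpha_g_eq:
  assumes "j < n"
  shows "\<alpha> j * g j = (-1) ^ j * (\<Prod>l<j. \<beta> l / \<alpha> l)"
  unfolding g_def using assms alpha_nonzero by (simp add: bidiag_inv_first_col)

lemma abs_alpha_g:
  assumes "j < n"
  shows "\<bar>\<alpha> j * g j\<bar> = (\<Prod>l<j. \<beta> l / \<alpha> l)"
proof -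
  have "0 \<le> (\<Prod>l<j. \<beta> l / \<alpha> l)"
    using beta_pos alpha_pos assms by (intro prod_nonneg) (simp add: less_imp_le)
  then show ?thesis
    unfolding alpha_g_eq[OF assms] by (simp add: abs_mult)
qed

lemma alpha_g_nonzero:
  assumes "j < n"
  shows "\<alpha> j * g j \<noteq> 0"
proof -
  have "0 < (\<Prod>l<j. \<beta> l / \<alpha> l)"
    using beta_pos alpha_pos assms by (intro prod_pos) simp
  then show ?thesis
    using abs_alpha_g[OF assms] by (metis abs_zero order_less_irrefl)
qed

lemma alpha_g_0: "\<alpha> 0 * g 0 = 1"
  using alpha_g_eq n_pos by simp

lemma alpha_g_Suc:
  assumes "Suc l < n"
  shows "\<alpha> (Suc l) * g (Suc l) = - (\<beta> l * g l)"
  using H_mult_g[OF assms] sum_bidiag_H_row_real[OF assms, of \<alpha> \<beta> g] by simp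

lemma g_shift:
  assumes "k + i < n"
  shows "g (k + i) = (\<alpha> k * g k) * bidiag_inv (\<lambda>i. \<alpha> (k + i)) (\<lambda>i. \<beta> (k + i)) i 0"
proof -
  have shifted: "\<alpha> (k + i) * bidiag_inv (\<lambda>i. \<alpha> (k + i)) (\<lambda>i. \<beta> (k + i)) i 0
      = (-1) ^ i * (\<Prod>l<i. \<beta> (k + l) / \<alpha> (k + l))"
    using bidiag_inv_first_col[where \<alpha> = "\<lambda>i. \<alpha> (k + i)" and j = i] assms alpha_nonzero by simp
  have split: "(\<Prod>l<k + i. \<beta> l / \<alpha> l) = (\<Prod>l<k. \<beta> l / \<alpha> l) * (\<Prod>l<i. \<beta> (k + l) / \<alpha> (k + l))"
    by (induction i) (simp_all add: mult.assoc)
  have "k < n"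
    using assms by simp
  have "\<alpha> (k + i) * g (k + i)
      = \<alpha> (k + i) * ((\<alpha> k * g k) * bidiag_inv (\<lambda>i. \<alpha> (k + i)) (\<lambda>i. \<beta> (k + i)) i 0)"
    unfolding alpha_g_eq[OF assms] alpha_g_eq[OF \<open>k < n\<close>] mult.left_commute[of "\<alpha> (k + i)"] shifted split
    by (simp add: power_add mult_ac)
  moreover have "\<alpha> (k + i) \<noteq> 0"
    using assms alpha_nonzero by simp
  ultimately show ?thesis
    by simp
qed

lemma Htmul_vanishing:
  assumes "c \<in> supported_below k" "k \<le> l" "l < n"
  shows "Htmul c l = 0"
  using sum_bidiag_H_col[OF assms(3), of \<alpha> \<beta> c] assms
  unfolding Htmul_def supported_below_def by simp

lemma cg_coeffs_supported: "cg_coeffs k \<in> supported_below k"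
  unfolding supported_below_def cg_coeffs_def by (auto intro!: sum.neutral)

lemma Htmul_cg_coeffs:
  assumes "l < n" "k \<le> n"
  shows "Htmul (cg_coeffs k) l = (if l < k then of_real (g l) else 0)"
proof -
  have "Htmul (cg_coeffs k) l = of_real (\<Sum>m<k. (\<Sum>j<n. bidiag_inv \<alpha> \<beta> m j * H j l) * g m)"
    unfolding Htmul_def cg_coeffs_def
    by (simp add: sum_distrib_left sum_distrib_right mult_ac sum.swap[of _ "{..<k}"])
  also have "(\<Sum>m<k. (\<Sum>j<n. bidiag_inv \<alpha> \<beta> m j * H j l) * g m) = (\<Sum>m<k. if m = l then g m else 0)"
    using assms by (intro sum.cong refl) (auto simp: bidiag_inv_mult_bidiag[OF _ assms(1) alpha_nonzero])
  finally show ?thesis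
    by simp
qed

lemma residual_qcomb: "b - W *v qcomb c = qcomb (\<lambda>i. f1 i - Tmul c i)"
  by (simp add: W_qcomb qcomb_diff qcomb_f1)

lemma residual_coords:
  assumes "j \<le> n" "c \<in> supported_below j" "\<forall>l<j. Htmul c l = of_real (g l)" "i < n"
  shows "f1 i - Tmul c i = (if i = j then of_real (\<alpha> j * g j) else 0)"
proof -
  define w where "w l = (if j \<le> l then (of_real (g l) :: complex) else 0)" for l
  have "f1 i - Tmul c i = Hmul (\<lambda>l. of_real (g l)) i - Hmul (Htmul c) i"
    using Hmul_g Tmul_eq_Hmul_Htmul assms(4) by simp
  also have "\<dots> = Hmul w i"
  proof -
    have "of_real (H i l) * of_real (g l) - of_real (H i l) * Htmul c l = of_real (H i l) * w l"
      if "l < n" for l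
      using assms(3) Htmul_vanishing[OF assms(2) _ that] unfolding w_def by (cases "j \<le> l") auto
    then show ?thesis
      unfolding Hmul_def by (simp add: sum_subtractf[symmetric])
  qed
  also have "\<dots> = of_real (\<alpha> i) * w i + (if 0 < i then of_real (\<beta> (i - 1)) * w (i - 1) else 0)"
    unfolding Hmul_def by (rule sum_bidiag_H_row[OF assms(4)])
  also have "\<dots> = (if i = j then of_real (\<alpha> j * g j) else 0)"
  proof (cases "j < i")
    case True
    then have "\<alpha> i * g i + \<beta> (i - 1) * g (i - 1) = 0"
      using H_mult_g[OF assms(4)] sum_bidiag_H_row_real[OF assms(4), of \<alpha> \<beta> g] by simp
    then have "of_real (\<alpha> i) * (of_real (g i) :: complex) + of_real (\<beta> (i - 1)) * of_real (g (i - 1)) = 0"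
      by (metis of_real_0 of_real_add of_real_mult)
    then show ?thesis
      using True unfolding w_def by auto
  qed (auto simp: w_def)
  finally show ?thesis .
qed

lemma W_qcomb_cg_coeffs_n: "W *v qcomb (cg_coeffs n) = b"
proof -
  have "f1 i - Tmul (cg_coeffs n) i = 0" if "i < n" for i
    using residual_coords[OF order.refl cg_coeffs_supported _ that] Htmul_cg_coeffs that by simp
  then have "b - W *v qcomb (cg_coeffs n) = 0"
    unfolding residual_qcomb by (simp add: qcomb_def)
  then show ?thesis
    by simp
qed

lemma solution_eq: "matrix_inv W *v b = qcomb (cg_coeffs n)"
  using matrix_inv_mult_eq[OF hpd_invertible[OF hpd] W_qcomb_cg_coeffs_n] .

lemma Wnorm_qcomb: "Wnorm W (qcomb d) = L2_set (\<lambda>l. norm (Htmul d l)) {..<n}"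
proof -
  have "cinner (qcomb d) (W *v qcomb d) = (\<Sum>i<n. \<Sum>l<n. of_real (H i l) * cnj (d i) * Htmul d l)"
    by (simp add: W_qcomb cinner_qcomb Tmul_eq_Hmul_Htmul Hmul_def sum_distrib_left mult_ac)
  also have "\<dots> = (\<Sum>l<n. \<Sum>i<n. of_real (H i l) * cnj (d i) * Htmul d l)"
    by (rule sum.swap)
  also have "\<dots> = (\<Sum>l<n. cnj (Htmul d l) * Htmul d l)"
    by (intro sum.cong refl) (simp add: Htmul_def sum_distrib_right)
  also have "\<dots> = of_real (\<Sum>l<n. (norm (Htmul d l))\<^sup>2)"
    by (simp only: of_real_sum complex_norm_square mult.commute)
  finally show ?thesis
    unfolding Wnorm_def L2_set_def by simp
qed

lemma error_Wnorm:
  "Wnorm W (matrix_inv W *v b - qcomb c) = sqrt (\<Sum>l<n. (norm (of_real (g l) - Htmul c l))\<^sup>2)"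
proof -
  have "Htmul (\<lambda>i. cg_coeffs n i - c i) l = of_real (g l) - Htmul c l" if "l < n" for l
    using Htmul_cg_coeffs[OF that order.refl] that
    by (simp add: Htmul_def algebra_simps sum_subtractf)
  then show ?thesis
    unfolding solution_eq qcomb_diff[symmetric] Wnorm_qcomb L2_set_def by simp
qed

section \<open>Conjugate gradients\<close>

lemma error_split:
  assumes "c \<in> supported_below k" "k \<le> n"
  shows "(\<Sum>l<n. (norm (of_real (g l) - Htmul c l))\<^sup>2)
       = (\<Sum>l<k. (norm (of_real (g l) - Htmul c l))\<^sup>2) + (\<Sum>l\<in>{k..<n}. (g l)\<^sup>2)"
proof -
  have split: "{..<n} = {..<k} \<union> {k..<n}"
    using assms(2) by auto
  have "(\<Sum>l<n. (norm (of_real (g l) - Htmul c l))\<^sup>2)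
      = (\<Sum>l<k. (norm (of_real (g l) - Htmul c l))\<^sup>2)
        + (\<Sum>l\<in>{k..<n}. (norm (of_real (g l) - Htmul c l))\<^sup>2)"
    unfolding split by (rule sum.union_disjoint) auto
  also have "(\<Sum>l\<in>{k..<n}. (norm (of_real (g l) - Htmul c l))\<^sup>2) = (\<Sum>l\<in>{k..<n}. (g l)\<^sup>2)"
    using Htmul_vanishing[OF assms(1)] by (intro sum.cong refl) auto
  finally show ?thesis .
qed

lemma cga_iterate_coeffs:
  assumes "k < n"
  obtains c where "c \<in> supported_below k" "cga_iterate W b k = qcomb c"
    and "\<forall>l<k. Htmul c l = of_real (g l)"
proof -
  define E where "E = (\<Sum>l\<in>{k..<n}. (g l)\<^sup>2)"
  have lower: "sqrt E \<le> Wnorm W (matrix_inv W *v b - y)" if "y \<in> krylov W b k" for y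
  proof -
    obtain c where c: "c \<in> supported_below k" "y = qcomb c"
      using \<open>y \<in> krylov W b k\<close> krylov_eq_qcomb_image assms by auto
    then have "Wnorm W (matrix_inv W *v b - y)
        = sqrt ((\<Sum>l<k. (norm (of_real (g l) - Htmul c l))\<^sup>2) + E)"
      using error_split[OF c(1)] assms by (simp add: error_Wnorm E_def)
    then show ?thesis
      by (simp add: sum_nonneg)
  qed
  have attained: "Wnorm W (matrix_inv W *v b - qcomb (cg_coeffs k)) = sqrt E"
    unfolding error_Wnorm using error_split[OF cg_coeffs_supported] Htmul_cg_coeffs assms E_def
    by simp
  have in_krylov: "qcomb (cg_coeffs k) \<in> krylov W b k"
    using qcomb_in_krylov cg_coeffs_supported assms by simp
  have optimal: "\<forall>y\<in>krylov W b k.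
      Wnorm W (matrix_inv W *v b - qcomb (cg_coeffs k)) \<le> Wnorm W (matrix_inv W *v b - y)"
    using lower attained by simp
  obtain c where c: "c \<in> supported_below k" "cga_iterate W b k = qcomb c"
    using cga_iterate_minimal(1)[OF in_krylov optimal] krylov_eq_qcomb_image assms by auto
  have "sqrt ((\<Sum>l<k. (norm (of_real (g l) - Htmul c l))\<^sup>2) + E) \<le> sqrt E"
    using cga_iterate_minimal(2)[OF in_krylov optimal] attained error_split[OF c(1)] c(2) assms
    by (simp add: error_Wnorm E_def)
  then have "(\<Sum>l<k. (norm (of_real (g l) - Htmul c l))\<^sup>2) = 0"
    by (simp add: order_antisym sum_nonneg)
  then have "\<forall>l<k. (norm (of_real (g l) - Htmul c l))\<^sup>2 = 0"
    by (subst (asm) sum_nonneg_eq_0_iff) auto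
  then show ?thesis
    using that c by simp
qed

lemma cga_residual_norm:
  assumes "k < n"
  shows "norm (b - W *v cga_iterate W b k) = (\<Prod>j<k. \<beta> j / \<alpha> j)"
proof -
  obtain c where c: "c \<in> supported_below k" "cga_iterate W b k = qcomb c"
    and fit: "\<forall>l<k. Htmul c l = of_real (g l)"
    using cga_iterate_coeffs[OF assms] .
  have "b - W *v cga_iterate W b k = qcomb (\<lambda>i. if i = k then of_real (\<alpha> k * g k) else 0)"
    unfolding c(2) residual_qcomb using residual_coords[OF less_imp_le[OF assms] c(1) fit]
    by (intro qcomb_cong) simp
  then show ?thesis
    using norm_qcomb_single[OF assms] abs_alpha_g[OF assms] norm_of_real[of "\<alpha> k * g k"]
    by (simp del: of_real_mult)
qed

lemma cga_error_Wnorm: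
  assumes "k < n"
  shows "Wnorm W (matrix_inv W *v b - cga_iterate W b k) = sqrt (\<Sum>l\<in>{k..<n}. (g l)\<^sup>2)"
proof -
  obtain c where c: "c \<in> supported_below k" "cga_iterate W b k = qcomb c"
    and fit: "\<forall>l<k. Htmul c l = of_real (g l)"
    using cga_iterate_coeffs[OF assms] .
  then show ?thesis
    using error_split[OF c(1)] assms by (simp add: error_Wnorm)
qed

lemma tail_norm_g:
  assumes "k < n"
  shows "sqrt (\<Sum>l\<in>{k..<n}. (g l)\<^sup>2) = (\<Prod>j<k. \<beta> j / \<alpha> j)
           * sqrt (fmat_inv (n - k) (\<lambda>i j. \<Sum>l<n - k. H (k + i) (k + l) * H (k + j) (k + l)) 0 0)"
proof -
  define \<alpha>' where "\<alpha>' i = \<alpha> (k + i)" for i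
  define \<beta>' where "\<beta>' i = \<beta> (k + i)" for i
  have "(\<Sum>l\<in>{k..<n}. (g l)\<^sup>2) = (\<Sum>i<n - k. (g (k + i))\<^sup>2)"
    by (subst sum.atLeastLessThan_shift_0) (simp add: atLeast0LessThan add.commute)
  also have "\<dots> = (\<alpha> k * g k)\<^sup>2 * (\<Sum>i<n - k. (bidiag_inv \<alpha>' \<beta>' i 0)\<^sup>2)"
    unfolding sum_distrib_left \<alpha>'_def \<beta>'_def using g_shift
    by (intro sum.cong refl) (simp add: power_mult_distrib)
  also have "(\<Sum>i<n - k. (bidiag_inv \<alpha>' \<beta>' i 0)\<^sup>2)
      = fmat_inv (n - k) (\<lambda>i j. \<Sum>l<n - k. H (k + i) (k + l) * H (k + j) (k + l)) 0 0"
    unfolding bidiag_H_shift \<alpha>'_def \<beta>'_def using assms alpha_nonzero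
    by (intro fmat_inv_bidiag_gram[symmetric]) auto
  finally show ?thesis
    using abs_alpha_g[OF assms] by (simp add: real_sqrt_mult)
qed

section \<open>MINRES\<close>

definition minres_dual :: "nat \<Rightarrow> nat \<Rightarrow> real" where
  "minres_dual k j = (if j \<le> k then 1 / (\<alpha> j * g j) else 0)"

lemma minres_dual_norm_sq:
  assumes "k < n"
  shows "(L2_set (minres_dual k) {..<n})\<^sup>2 = (\<Sum>j\<le>k. \<Prod>l<j. \<alpha> l ^ 2 / \<beta> l ^ 2)"
proof -
  have "(L2_set (minres_dual k) {..<n})\<^sup>2 = (\<Sum>j<n. (minres_dual k j)\<^sup>2)"
    by (simp add: L2_set_def sum_nonneg)
  also have "\<dots> = (\<Sum>j\<le>k. (1 / (\<alpha> j * g j))\<^sup>2)"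
    using assms unfolding minres_dual_def by (intro sum.mono_neutral_cong_right) auto
  also have "\<dots> = (\<Sum>j\<le>k. \<Prod>l<j. \<alpha> l ^ 2 / \<beta> l ^ 2)"
  proof (intro sum.cong refl)
    fix j
    assume "j \<in> {..k}"
    then have "(\<alpha> j * g j)\<^sup>2 = (\<Prod>l<j. \<beta> l / \<alpha> l)\<^sup>2"
      using abs_alpha_g[of j] assms by (metis atMost_iff le_less_trans power2_abs)
    then show "(1 / (\<alpha> j * g j))\<^sup>2 = (\<Prod>l<j. \<alpha> l ^ 2 / \<beta> l ^ 2)"
      by (simp add: power_one_over prod_dividef power_divide prod_power_distrib)
  qed
  finally show ?thesis .
qed

lemma minres_dual_orthogonal:
  assumes "k < n" "c \<in> supported_below k"
  shows "(\<Sum>i<n. of_real (minres_dual k i) * Tmul c i) = 0"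
proof -
  have "(\<Sum>i<n. of_real (minres_dual k i) * Tmul c i)
      = (\<Sum>i<n. \<Sum>l<n. of_real (minres_dual k i * H i l) * Htmul c l)"
    by (intro sum.cong refl) (simp add: Tmul_eq_Hmul_Htmul Hmul_def sum_distrib_left mult_ac)
  also have "\<dots> = (\<Sum>l<n. \<Sum>i<n. of_real (minres_dual k i * H i l) * Htmul c l)"
    by (rule sum.swap)
  also have "\<dots> = (\<Sum>l<n. of_real (\<Sum>i<n. H i l * minres_dual k i) * Htmul c l)"
    by (intro sum.cong refl) (simp add: sum_distrib_left sum_distrib_right mult_ac)
  also have "\<dots> = 0"
  proof (intro sum.neutral ballI)
    fix l
    assume "l \<in> {..<n}"
    show "of_real (\<Sum>i<n. H i l * minres_dual k i) * Htmul c l = 0"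
    proof (cases "l < k")
      case True
      then have "Suc l < n"
        using assms(1) by simp
      have "g l \<noteq> 0" "\<beta> l \<noteq> 0"
        using alpha_g_nonzero[of l] beta_pos[OF \<open>Suc l < n\<close>] \<open>Suc l < n\<close> by auto
      then have "\<alpha> l * minres_dual k l + \<beta> l * minres_dual k (Suc l) = 0"
        using True alpha_nonzero \<open>Suc l < n\<close>
        by (simp add: minres_dual_def alpha_g_Suc field_simps)
      then show ?thesis
        using sum_bidiag_H_col_real[of l n \<alpha> \<beta> "minres_dual k"] \<open>Suc l < n\<close> by simp
    qed (use Htmul_vanishing[OF assms(2)] \<open>l \<in> {..<n}\<close> in simp)
  qed
  finally show ?thesis .
qed

lemma minres_dual_norm_pos:
  assumes "k < n"
  shows "0 < L2_set (minres_dual k) {..<n}"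
proof -
  have "(L2_set (minres_dual k) {..<n})\<^sup>2 \<ge> (\<Sum>j\<in>{0}. \<Prod>l<j. \<alpha> l ^ 2 / \<beta> l ^ 2)"
    unfolding minres_dual_norm_sq[OF assms] by (intro sum_mono2) (auto intro!: prod_nonneg)
  then have "L2_set (minres_dual k) {..<n} \<noteq> 0"
    by auto
  then show ?thesis
    using L2_set_nonneg[of "minres_dual k" "{..<n}"] by linarith
qed

lemma minres_residual_lower_bound:
  assumes "k < n" "c \<in> supported_below k"
  shows "1 / L2_set (minres_dual k) {..<n} \<le> norm (b - W *v qcomb c)"
proof -
  define r where "r i = f1 i - Tmul c i" for i
  have "(\<Sum>i<n. of_real (minres_dual k i) * f1 i) = 1"
    using n_pos alpha_g_0 by (simp add: f1_def minres_dual_def if_distrib[of "(*) _"] cong: if_cong)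
  then have "(\<Sum>i<n. of_real (minres_dual k i) * r i) = 1"
    using minres_dual_orthogonal[OF assms]
    by (simp add: r_def right_diff_distrib sum_subtractf)
  then have "1 \<le> (\<Sum>i<n. \<bar>minres_dual k i\<bar> * \<bar>norm (r i)\<bar>)"
    by (metis (no_types, lifting) abs_norm_cancel norm_mult norm_of_real norm_one norm_sum sum.cong)
  also have "\<dots> \<le> L2_set (minres_dual k) {..<n} * L2_set (\<lambda>i. norm (r i)) {..<n}"
    by (rule L2_set_mult_ineq)
  also have "\<dots> = L2_set (minres_dual k) {..<n} * norm (b - W *v qcomb c)"
    unfolding residual_qcomb norm_qcomb r_def ..
  finally show ?thesis
    using minres_dual_norm_pos[OF assms(1)] by (simp add: field_simps)
qed

lemma Tmul_linear: "Tmul (\<lambda>i. \<Sum>j\<in>A. f j * h j i) i = (\<Sum>j\<in>A. f j * Tmul (h j) i)"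
  unfolding Tmul_def by (simp add: sum_distrib_left sum.swap[of _ A] mult_ac)

lemma residual_cg_combination:
  assumes "k < n" "(\<Sum>j\<le>k. w j) = 1" "i < n"
  shows "f1 i - Tmul (\<lambda>l. \<Sum>j\<le>k. of_real (w j) * cg_coeffs j l) i
       = (if i \<le> k then of_real (w i * (\<alpha> i * g i)) else 0)"
proof -
  have "f1 i - Tmul (\<lambda>l. \<Sum>j\<le>k. of_real (w j) * cg_coeffs j l) i
      = of_real (\<Sum>j\<le>k. w j) * f1 i - (\<Sum>j\<le>k. of_real (w j) * Tmul (cg_coeffs j) i)"
    using assms(2) by (simp add: Tmul_linear)
  also have "\<dots> = (\<Sum>j\<le>k. of_real (w j) * (f1 i - Tmul (cg_coeffs j) i))"
    by (simp add: right_diff_distrib sum_subtractf sum_distrib_right)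
  also have "\<dots> = (\<Sum>j\<le>k. if i = j then of_real (w j * (\<alpha> j * g j)) else 0)"
    using residual_coords[OF _ cg_coeffs_supported _ assms(3)] Htmul_cg_coeffs assms(1)
    by (intro sum.cong refl) simp
  finally show ?thesis
    by simp
qed

lemma minres_residual_attained:
  assumes "k < n"
  obtains c where "c \<in> supported_below k"
    and "norm (b - W *v qcomb c) = 1 / L2_set (minres_dual k) {..<n}"
proof -
  define S where "S = (L2_set (minres_dual k) {..<n})\<^sup>2"
  define c where "c l = (\<Sum>j\<le>k. of_real ((minres_dual k j)\<^sup>2 / S) * cg_coeffs j l)" for l
  have "0 < S"
    using minres_dual_norm_pos[OF assms] by (simp add: S_def)
  have "(\<Sum>j\<le>k. (minres_dual k j)\<^sup>2 / S) = (\<Sum>j<n. (minres_dual k j)\<^sup>2) / S"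
    unfolding sum_divide_distrib[symmetric] using assms
    by (intro arg_cong[where f="\<lambda>t. t / S"] sum.mono_neutral_cong_left) (auto simp: minres_dual_def)
  also have "\<dots> = 1"
    using \<open>0 < S\<close> by (simp add: S_def L2_set_def sum_nonneg)
  finally have weights: "(\<Sum>j\<le>k. (minres_dual k j)\<^sup>2 / S) = 1" .
  have "f1 i - Tmul c i = of_real (minres_dual k i / S)" if "i < n" for i
    unfolding c_def residual_cg_combination[OF assms weights that]
    using alpha_g_nonzero[OF that] by (simp add: minres_dual_def power2_eq_square)
  then have "norm (b - W *v qcomb c) = L2_set (\<lambda>i. \<bar>minres_dual k i\<bar> * (1 / S)) {..<n}"
    unfolding residual_qcomb norm_qcomb using \<open>0 < S\<close>
    by (intro L2_set_cong) (simp_all add: norm_divide)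
  also have "\<dots> = L2_set (minres_dual k) {..<n} / S"
    using L2_set_right_distrib[of "1 / S" "\<lambda>i. \<bar>minres_dual k i\<bar>"] \<open>0 < S\<close>
    by (simp add: L2_set_def)
  also have "\<dots> = 1 / L2_set (minres_dual k) {..<n}"
    using \<open>0 < S\<close> by (simp add: S_def power2_eq_square)
  finally have "norm (b - W *v qcomb c) = 1 / L2_set (minres_dual k) {..<n}" .
  moreover have "c \<in> supported_below k"
    using cg_coeffs_supported unfolding c_def supported_below_def by (auto intro!: sum.neutral)
  ultimately show ?thesis
    using that by blast
qed

lemma one_over_sqrt_eq_powr:
  fixes x :: real
  assumes "0 \<le> x"
  shows "1 / sqrt x = x powr (-1/2)"
proof -
  have "x powr (-1/2) = inverse (x powr (1/2))"
    using powr_minus[of x "1/2"] by simp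
  then show ?thesis
    using assms by (simp add: powr_half_sqrt inverse_eq_divide)
qed

lemma minres_iterate_residual:
  assumes "k < n"
  shows "norm (b - W *v minres_iterate W b k) = 1 / L2_set (minres_dual k) {..<n}"
proof -
  obtain c where c: "c \<in> supported_below k"
    and attained: "norm (b - W *v qcomb c) = 1 / L2_set (minres_dual k) {..<n}"
    using minres_residual_attained[OF assms] .
  have krylov: "krylov W b k = qcomb ` supported_below k"
    using krylov_eq_qcomb_image assms by simp
  have in_krylov: "qcomb c \<in> krylov W b k"
    using c krylov by simp
  have optimal: "\<forall>y\<in>krylov W b k. norm (b - W *v qcomb c) \<le> norm (b - W *v y)"
  proof
    fix y
    assume "y \<in> krylov W b k"
    then obtain d where d: "d \<in> supported_below k" "y = qcomb d"
      using krylov by auto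
    show "norm (b - W *v qcomb c) \<le> norm (b - W *v y)"
      unfolding attained d(2) by (rule minres_residual_lower_bound[OF assms d(1)])
  qed
  obtain c' where c': "c' \<in> supported_below k" "minres_iterate W b k = qcomb c'"
    using minres_iterate_minimal(1)[OF in_krylov optimal] krylov by auto
  have "norm (b - W *v minres_iterate W b k) \<le> 1 / L2_set (minres_dual k) {..<n}"
    using minres_iterate_minimal(2)[OF in_krylov optimal] unfolding attained .
  moreover have "1 / L2_set (minres_dual k) {..<n} \<le> norm (b - W *v minres_iterate W b k)"
    unfolding c'(2) by (rule minres_residual_lower_bound[OF assms c'(1)])
  ultimately show ?thesis
    by linarith
qed

lemma minres_residual_norm:
  assumes "k < n"
  shows "norm (b - W *v minres_iterate W b k) = (\<Sum>j\<le>k. \<Prod>l<j. \<alpha> l ^ 2 / \<beta> l ^ 2) powr (-1/2)"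
proof -
  define S where "S = (\<Sum>j\<le>k. \<Prod>l<j. \<alpha> l ^ 2 / \<beta> l ^ 2)"
  have "L2_set (minres_dual k) {..<n} = sqrt S"
    unfolding S_def minres_dual_norm_sq[OF assms, symmetric] by simp
  moreover have "1 / sqrt S = S powr (-1/2)"
    unfolding S_def by (intro one_over_sqrt_eq_powr sum_nonneg prod_nonneg) simp
  ultimately show ?thesis
    unfolding minres_iterate_residual[OF assms] S_def by simp
qed

lemma minres_residual_final: "b - W *v minres_iterate W b n = 0"
proof -
  have "qcomb (cg_coeffs n) \<in> krylov W b n"
    using qcomb_in_krylov cg_coeffs_supported by simp
  moreover have "\<forall>y\<in>krylov W b n. norm (b - W *v qcomb (cg_coeffs n)) \<le> norm (b - W *v y)"
    by (simp add: W_qcomb_cg_coeffs_n)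
  ultimately have "norm (b - W *v minres_iterate W b n) \<le> 0"
    using minres_iterate_minimal(2) W_qcomb_cg_coeffs_n by fastforce
  then show ?thesis
    by simp
qed

end

theorem theorem1p1:
  fixes W :: "complex^'N^'N" and b :: "complex^'N" and n :: nat
    and \<alpha> \<beta> :: "nat \<Rightarrow> real"
  assumes hpd: "hpd W"
    and bnorm: "norm b = 1"
    and lterm: "lanczos_terminates_at W b n"
    and nN: "n \<le> CARD('N)"
    and alpha_pos: "\<forall>j<n. 0 < \<alpha> j"
    and chol: "\<forall>i<n. \<forall>j<n. jacobi_T W b i j
                 = of_real (\<Sum>l<n. bidiag_H \<alpha> \<beta> i l * bidiag_H \<alpha> \<beta> j l)"
  shows
    "(\<forall>k<n.
        norm (b - W *v cga_iterate W b k) = (\<Prod>j<k. \<beta> j / \<alpha> j)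
      \<and> Wnorm W (matrix_inv W *v b - cga_iterate W b k)
          = norm (b - W *v cga_iterate W b k)
            * sqrt (fmat_inv (n - k)
                 (\<lambda>i j. \<Sum>l<n - k. bidiag_H \<alpha> \<beta> (k + i) (k + l) * bidiag_H \<alpha> \<beta> (k + j) (k + l)) 0 0))
   \<and> (\<forall>k<n.
        norm (b - W *v minres_iterate W b k)
          = (\<Sum>j\<le>k. \<Prod>l<j. \<alpha> l ^ 2 / \<beta> l ^ 2) powr (-1/2))
   \<and> b - W *v minres_iterate W b n = 0"
proof -
  interpret lanczos_cholesky W b n \<alpha> \<beta>
    using hpd bnorm lterm alpha_pos chol by unfold_locales (auto simp: hpd_def)
  show ?thesis
    using cga_residual_norm cga_error_Wnorm tail_norm_g minres_residual_norm minres_residual_final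
    by simp
qed

end
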